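(* Let $n\ge 2$ be even and let $m \ge \frac{5n}{2}-1$. Then the permutation $(1,n)(2n-1,2n)\in S_m$ is a product of $n$-crossing permutations over $S_m$.
   Context: For integers $2\le n\le m$ and $1 \le j \le m-n+1$, the $n$-crossing permutation $\pi_j\in S_m$ is $\pi_j=(j,\,j+n-1)(j+1,\,j+n-2)\cdots$, i.e. the involution sending $i \mapsto 2j+n-1-i$ for $j\le i\le j+n-1$ and fixing all other elements of $\{1,\dots,m\}$. The $n$-crossing permutations over $S_m$ are $\pi_1,\dots,\pi_{m-n+1}$. *)

theory Defs
  imports Complex_Main "HOL-Combinatorics.Transposition"
begin

text \<open>Permutations of {1..m} are represented as functions nat => nat fixing every
  point outside {1..m}.\<close>

definition crossing :: "nat \<Rightarrow> nat \<Rightarrow> nat \<Rightarrow> nat" where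
  "crossing n j i = (if j \<le> i \<and> i \<le> j + n - 1 then 2 * j + n - 1 - i else i)"

definition crossing_perms :: "nat \<Rightarrow> nat \<Rightarrow> (nat \<Rightarrow> nat) set" where
  "crossing_perms n m = {crossing n j | j. 1 \<le> j \<and> j \<le> m - n + 1}"

definition product_of_crossings :: "nat \<Rightarrow> nat \<Rightarrow> (nat \<Rightarrow> nat) \<Rightarrow> bool" where
  "product_of_crossings n m \<sigma> \<longleftrightarrow>
     (\<exists>ps. set ps \<subseteq> crossing_perms n m \<and> \<sigma> = foldr (\<circ>) ps id)"

end

(* The map rho = pi_n o pi_1 sends 1 to 2n-1, i to n+1-i on {2..n} and i to 3n-1-i on
   {n+1..2n-1}, so rho^2 is the 3-cycle (1 n 2n-1). Conjugating it by pi_n o pi_(3n/2), which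
   fixes 1 and sends n, 2n-1 to 2n-1, 2n, yields (1 2n-1 2n), and
   (1 n 2n-1)^2 (1 2n-1 2n) = (1 n)(2n-1 2n). Evenness of n is needed for the index 3n/2,
   and the bound on m is exactly the condition that pi_(3n/2) is an n-crossing of S_m. *)

theory Submission
  imports Defs "HOL-Combinatorics.Cycles"
begin

lemma crossing_inside: "j \<le> i \<Longrightarrow> i \<le> j + n - 1 \<Longrightarrow> crossing n j i = 2 * j + n - 1 - i"
  unfolding crossing_def by simp

lemma crossing_outside: "i < j \<or> j + n - 1 < i \<Longrightarrow> crossing n j i = i"
  unfolding crossing_def by auto

lemma crossing_involution: "crossing n j \<circ> crossing n j = id"
  unfolding crossing_def by (auto simp: fun_eq_iff)

lemma product_of_crossings_crossing:
  "1 \<le> j \<Longrightarrow> j \<le> m - n + 1 \<Longrightarrow> product_of_crossings n m (crossing n j)"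
  unfolding product_of_crossings_def crossing_perms_def
  by (rule exI[of _ "[crossing n j]"]) auto

lemma foldr_comp_eq: "foldr (\<circ>) fs g = foldr (\<circ>) fs id \<circ> g"
  by (induction fs) (simp_all add: comp_assoc)

lemma product_of_crossings_comp:
  assumes "product_of_crossings n m f" and "product_of_crossings n m g"
  shows "product_of_crossings n m (f \<circ> g)"
proof -
  obtain fs gs where "set fs \<subseteq> crossing_perms n m" "f = foldr (\<circ>) fs id"
    and "set gs \<subseteq> crossing_perms n m" "g = foldr (\<circ>) gs id"
    using assms unfolding product_of_crossings_def by blast
  then show ?thesis
    unfolding product_of_crossings_def
    by (intro exI[of _ "fs @ gs"]) (simp add: foldr_comp_eq[of fs "foldr (\<circ>) gs id"])
qed

lemma cycle_of_list_three_apply: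
  "cycle_of_list [x, y, z] i = (if i = x then y else if i = y then z else if i = z then x else i)"
  if "distinct [x, y, z]"
  using that by (auto simp: transpose_def)

lemma crossing_pair_apply:
  assumes "n \<ge> 2"
  shows "crossing n n (crossing n 1 i) =
    (if i = 1 then 2 * n - 1 else if 1 < i \<and> i \<le> n then n + 1 - i
     else if n < i \<and> i \<le> 2 * n - 1 then 3 * n - 1 - i else i)"
proof -
  consider "i = 0" | "i = 1" | "1 < i \<and> i \<le> n" | "n < i \<and> i \<le> 2 * n - 1" | "2 * n - 1 < i"
    by linarith
  then show ?thesis
  proof cases
    case 2
    then show ?thesis using assms by (simp add: crossing_inside)
  next
    case 3
    then have "crossing n 1 i = n + 1 - i" by (simp add: crossing_inside)
    moreover have "crossing n n (n + 1 - i) = n + 1 - i" using 3 by (intro crossing_outside) auto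
    ultimately show ?thesis using 3 by simp
  next
    case 4
    then have "crossing n 1 i = i" by (intro crossing_outside) auto
    moreover have "crossing n n i = 3 * n - 1 - i" using 4 by (subst crossing_inside) auto
    ultimately show ?thesis using 4 by simp
  qed (use assms in \<open>simp_all add: crossing_outside\<close>)
qed

lemma crossing_pair_square:
  assumes "n \<ge> 2"
  shows "(crossing n n \<circ> crossing n 1) \<circ> (crossing n n \<circ> crossing n 1) = cycle_of_list [1, n, 2 * n - 1]"
proof
  fix i
  define r where "r = crossing n n \<circ> crossing n 1"
  note r_apply = crossing_pair_apply[OF assms, folded comp_apply[of "crossing n n"], folded r_def]
  have "distinct [1, n, 2 * n - 1]" using assms by auto
  note cycle = cycle_of_list_three_apply[OF this]
  consider "i = 0" | "i = 1" | "1 < i \<and> i < n" | "i = n" | "n < i \<and> i < 2 * n - 1"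
    | "i = 2 * n - 1" | "2 * n - 1 < i"
    by linarith
  then have "r (r i) = cycle_of_list [1, n, 2 * n - 1] i"
  proof cases
    case 3
    then have "r i = n + 1 - i" "r (n + 1 - i) = i" by (subst r_apply, auto)+
    then show ?thesis using 3 cycle[of i] by (auto simp del: cycle_of_list.simps)
  next
    case 5
    then have "r i = 3 * n - 1 - i" "r (3 * n - 1 - i) = i" by (subst r_apply, auto)+
    then show ?thesis using 5 cycle[of i] by (auto simp del: cycle_of_list.simps)
  qed (use assms cycle[of i] in \<open>auto simp: r_apply simp del: cycle_of_list.simps\<close>)
  then show "((crossing n n \<circ> crossing n 1) \<circ> (crossing n n \<circ> crossing n 1)) i =
      cycle_of_list [1, n, 2 * n - 1] i"
    by (simp add: r_def)
qed

lemma crossing_conj_cycle: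
  assumes "n = 2 * k" and "k \<ge> 1"
  shows "(crossing n n \<circ> crossing n (3 * k)) \<circ> cycle_of_list [1, n, 2 * n - 1]
           \<circ> (crossing n (3 * k) \<circ> crossing n n) = cycle_of_list [1, 2 * n - 1, 2 * n]"
proof -
  define h where "h = crossing n n \<circ> crossing n (3 * k)"
  have h_inverse: "h \<circ> (crossing n (3 * k) \<circ> crossing n n) = id"
    "(crossing n (3 * k) \<circ> crossing n n) \<circ> h = id"
    unfolding h_def by (simp_all add: comp_assoc crossing_involution,
                        simp_all flip: comp_assoc add: crossing_involution)
  have "h 1 = 1" "h n = 2 * n - 1" "h (2 * n - 1) = 2 * n"
    unfolding h_def crossing_def using assms by auto
  then have image: "map h [1, n, 2 * n - 1] = [1, 2 * n - 1, 2 * n]" by simp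
  have "distinct [1, n, 2 * n - 1]" using assms by auto
  from conjugation_of_cycle[OF this o_bij[OF h_inverse(2,1)]]
  have "h \<circ> cycle_of_list [1, n, 2 * n - 1] \<circ> inv h = cycle_of_list [1, 2 * n - 1, 2 * n]"
    unfolding image .
  from this[unfolded inv_unique_comp[OF h_inverse], unfolded h_def] show ?thesis .
qed

lemma cycles_three_product_eq_transpositions:
  assumes "distinct [x, y, z, w]"
  shows "cycle_of_list [x, y, z] \<circ> cycle_of_list [x, y, z] \<circ> cycle_of_list [x, z, w]
           = transpose x y \<circ> transpose z w"
  using assms by (auto simp: fun_eq_iff transpose_def)

theorem lemma2p7:
  fixes n m :: nat
  assumes "n \<ge> 2" and "even n" and "real m \<ge> 5 * real n / 2 - 1"
  shows "product_of_crossings n m (transpose 1 n \<circ> transpose (2 * n - 1) (2 * n))"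
proof -
  obtain k where k: "n = 2 * k" "k \<ge> 1" using assms(1,2) by auto
  have "m + 1 \<ge> 5 * k" using assms(3) k by linarith
  then have a: "product_of_crossings n m (crossing n n)"
    and b: "product_of_crossings n m (crossing n 1)"
    and c: "product_of_crossings n m (crossing n (3 * k))"
    using k by (auto intro: product_of_crossings_crossing)
  let ?\<rho> = "crossing n n \<circ> crossing n 1"
  have "product_of_crossings n m (?\<rho> \<circ> ?\<rho>)"
    using a b by (intro product_of_crossings_comp)
  then have cyc: "product_of_crossings n m (cycle_of_list [1, n, 2 * n - 1])"
    using crossing_pair_square[OF assms(1)] by simp
  then have "product_of_crossings n m ((crossing n n \<circ> crossing n (3 * k))
               \<circ> cycle_of_list [1, n, 2 * n - 1] \<circ> (crossing n (3 * k) \<circ> crossing n n))"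
    using a c by (intro product_of_crossings_comp)
  then have "product_of_crossings n m (cycle_of_list [1, 2 * n - 1, 2 * n])"
    using crossing_conj_cycle[OF k] by simp
  with cyc have "product_of_crossings n m (cycle_of_list [1, n, 2 * n - 1] \<circ>
      cycle_of_list [1, n, 2 * n - 1] \<circ> cycle_of_list [1, 2 * n - 1, 2 * n])"
    by (intro product_of_crossings_comp)
  moreover have "distinct [1, n, 2 * n - 1, 2 * n]" using assms(1) by auto
  ultimately show ?thesis
    by (simp only: cycles_three_product_eq_transpositions)
qed

end
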